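(* Let $K$ be a finite simplicial complex, $f$ an injective filtration function on $K$, $n$ a positive integer, and $\alpha$ an $n$-cycle whose class $[\alpha]\in H_n(K^f_a)$ is born at $a$ and terminated at a finite value $b>a$. Let $R_u=\min\{|f(\tau)-b|: \tau \text{ a birth } (n+1)\text{-simplex with } f(\tau)>b\}$ (or $\infty$ if there is no such $\tau$), and $R_l=\min\{|f(\tau)-b|: \tau \text{ a terminal } (n+1)\text{-simplex with } f(\tau)<b\}$ (or $\infty$ if there is no such $\tau$). Then $[\alpha]$ is $\varepsilon$-terminally-rigid for $\varepsilon=\frac12\min\{b-a,R_u,R_l\}$.
   Context: A filtration function on a finite simplicial complex $K$ is a map $f\colon K\to\mathbb{R}$ with $f(\sigma)\le f(\tau)$ whenever $\sigma$ is a face of $\tau$. Sublevel complexes are $K^f_r=f^{-1}((-\infty,r])$; homology is with coefficients in a fixed field. For a nontrivial class $[\alpha]\in H_n(K^f_r)$, its birth is the infimum of $q\le r$ such that $[\alpha]$ is in the image of $H_n(K^f_q)\to H_n(K^f_r)$, and its termination scale is the infimum of $q\ge r$ such that $[\alpha]$ maps to $0$ in $H_n(K^f_q)$. Since $f$ is injective, each simplex $\sigma$ is either a birth simplex (adding it creates a new nontrivial homology class, i.e. $\partial\sigma$ is already a boundary in the complex of simplices with smaller $f$-value) or a terminal simplex (adding it makes a nontrivial homology class trivial). $\|f-g\|_\infty=\max_{\sigma\in K}|f(\sigma)-g(\sigma)|$. For an injective filtration function $g$ with $\|f-g\|_\infty\le\varepsilon$, $\Delta_{g,\alpha}$ is the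 simplex $\tau$ such that $\alpha$ is a boundary in $K^g_{g(\tau)}$ but not in $K^g_r$ for $r<g(\tau)$; $\Sigma_\varepsilon$ is the set of all such $\Delta_{g,\alpha}$ over injective filtration functions $g$ with $\|f-g\|_\infty\le\varepsilon$. The class $[\alpha]$ is $\varepsilon$-terminally-rigid if $|\Sigma_\varepsilon|=1$. *)

theory Defs
  imports Complex_Main
begin

text \<open>The vertex order fixes
orientations for the simplicial boundary.\<close>

definition simplicial_complex :: "'v set set \<Rightarrow> bool" where
  "simplicial_complex K \<longleftrightarrow> finite K \<and>
     (\<forall>\<sigma>\<in>K. finite \<sigma> \<and> \<sigma> \<noteq> {}) \<and>
     (\<forall>\<sigma>\<in>K. \<forall>\<tau>. \<tau> \<subseteq> \<sigma> \<and> \<tau> \<noteq> {} \<longrightarrow> \<tau> \<in> K)"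

definition is_simplex_dim :: "nat \<Rightarrow> 'v set \<Rightarrow> bool" where
  "is_simplex_dim k \<sigma> \<longleftrightarrow> finite \<sigma> \<and> card \<sigma> = k + 1"

definition is_chain :: "'v set set \<Rightarrow> nat \<Rightarrow> ('v set \<Rightarrow> 'k::field) \<Rightarrow> bool" where
  "is_chain L k c \<longleftrightarrow> (\<forall>\<sigma>. c \<sigma> \<noteq> 0 \<longrightarrow> \<sigma> \<in> L \<and> is_simplex_dim k \<sigma>)"

text \<open>Incidence number [\<sigma> : \<tau>] = (-1)^i when \<tau> is \<sigma> with its i-th vertex
(in increasing order, counted from 0) removed, and 0 otherwise.\<close>
definition incidence :: "'v::linorder set \<Rightarrow> 'v set \<Rightarrow> 'k::field" where
  "incidence \<sigma> \<tau> =
     (if finite \<sigma> \<and> \<tau> \<subseteq> \<sigma> \<and> card (\<sigma> - \<tau>) = 1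
      then (- 1) ^ card {w\<in>\<sigma>. w < (THE v. v \<in> \<sigma> - \<tau>)} else 0)"

definition boundary_op :: "('v::linorder set \<Rightarrow> 'k::field) \<Rightarrow> ('v set \<Rightarrow> 'k)" where
  "boundary_op c = (\<lambda>\<tau>. \<Sum>\<sigma>\<in>{\<sigma>. c \<sigma> \<noteq> 0}. c \<sigma> * incidence \<sigma> \<tau>)"

definition is_cycle :: "'v::linorder set set \<Rightarrow> nat \<Rightarrow> ('v set \<Rightarrow> 'k::field) \<Rightarrow> bool" where
  "is_cycle L k z \<longleftrightarrow> is_chain L k z \<and> boundary_op z = (\<lambda>_. 0)"

definition is_boundary :: "'v::linorder set set \<Rightarrow> nat \<Rightarrow> ('v set \<Rightarrow> 'k::field) \<Rightarrow> bool" where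
  "is_boundary L k z \<longleftrightarrow> (\<exists>c. is_chain L (Suc k) c \<and> boundary_op c = z)"

definition elem_chain :: "'v set \<Rightarrow> ('v set \<Rightarrow> 'k::field)" where
  "elem_chain \<tau> = (\<lambda>\<sigma>. if \<sigma> = \<tau> then 1 else 0)"

definition filtration :: "'v set set \<Rightarrow> ('v set \<Rightarrow> real) \<Rightarrow> bool" where
  "filtration K f \<longleftrightarrow> (\<forall>\<sigma>\<in>K. \<forall>\<tau>\<in>K. \<sigma> \<subseteq> \<tau> \<longrightarrow> f \<sigma> \<le> f \<tau>)"

definition inj_filtration :: "'v set set \<Rightarrow> ('v set \<Rightarrow> real) \<Rightarrow> bool" where
  "inj_filtration K f \<longleftrightarrow> filtration K f \<and> inj_on f K"

definition sublevel :: "'v set set \<Rightarrow> ('v set \<Rightarrow> real) \<Rightarrow> real \<Rightarrow> 'v set set" where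
  "sublevel K f r = {\<sigma>\<in>K. f \<sigma> \<le> r}"

text \<open>Birth of the class [z] in H_k(K^f_r): infimum of q \<le> r such that [z] lies in
the image of H_k(K^f_q) \<rightarrow> H_k(K^f_r).\<close>
definition birth :: "'v::linorder set set \<Rightarrow> ('v set \<Rightarrow> real) \<Rightarrow> nat \<Rightarrow> real
     \<Rightarrow> ('v set \<Rightarrow> 'k::field) \<Rightarrow> real" where
  "birth K f k r z = Inf {q. q \<le> r \<and>
      (\<exists>w. is_cycle (sublevel K f q) k w \<and> is_boundary (sublevel K f r) k (\<lambda>\<sigma>. z \<sigma> - w \<sigma>))}"

definition termination_scale :: "'v::linorder set set \<Rightarrow> ('v set \<Rightarrow> real) \<Rightarrow> nat \<Rightarrow> real
     \<Rightarrow> ('v set \<Rightarrow> 'k::field) \<Rightarrow> real" where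
  "termination_scale K f k r z = Inf {q. q \<ge> r \<and> is_boundary (sublevel K f q) k z}"

definition birth_simplex :: "'k::field itself \<Rightarrow> 'v::linorder set set \<Rightarrow> ('v set \<Rightarrow> real)
     \<Rightarrow> 'v set \<Rightarrow> bool" where
  "birth_simplex _ K f \<tau> \<longleftrightarrow> \<tau> \<in> K \<and>
     (\<exists>k. card \<tau> = k + 2 \<and>
        is_boundary {\<sigma>\<in>K. f \<sigma> < f \<tau>} k (boundary_op (elem_chain \<tau> :: 'v set \<Rightarrow> 'k)))"

definition terminal_simplex :: "'k::field itself \<Rightarrow> 'v::linorder set set \<Rightarrow> ('v set \<Rightarrow> real)
     \<Rightarrow> 'v set \<Rightarrow> bool" where
  "terminal_simplex _ K f \<tau> \<longleftrightarrow> \<tau> \<in> K \<and>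
     (\<exists>k (z :: 'v set \<Rightarrow> 'k). card \<tau> = k + 2 \<and>
        is_cycle {\<sigma>\<in>K. f \<sigma> < f \<tau>} k z \<and>
        \<not> is_boundary {\<sigma>\<in>K. f \<sigma> < f \<tau>} k z \<and>
        is_boundary {\<sigma>\<in>K. f \<sigma> \<le> f \<tau>} k z)"

definition is_Delta :: "'v::linorder set set \<Rightarrow> ('v set \<Rightarrow> real) \<Rightarrow> nat
     \<Rightarrow> ('v set \<Rightarrow> 'k::field) \<Rightarrow> 'v set \<Rightarrow> bool" where
  "is_Delta K g k z \<tau> \<longleftrightarrow> \<tau> \<in> K \<and> is_boundary (sublevel K g (g \<tau>)) k z \<and>
     (\<forall>r < g \<tau>. \<not> is_boundary (sublevel K g r) k z)"

definition Sigma_eps :: "'v::linorder set set \<Rightarrow> ('v set \<Rightarrow> real) \<Rightarrow> nat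
     \<Rightarrow> ('v set \<Rightarrow> 'k::field) \<Rightarrow> real \<Rightarrow> 'v set set" where
  "Sigma_eps K f k z \<epsilon> = {\<tau>. \<exists>g. inj_filtration K g \<and> (\<forall>\<sigma>\<in>K. \<bar>f \<sigma> - g \<sigma>\<bar> \<le> \<epsilon>) \<and>
       is_Delta K g k z \<tau>}"

definition terminally_rigid :: "'v::linorder set set \<Rightarrow> ('v set \<Rightarrow> real) \<Rightarrow> nat
     \<Rightarrow> ('v set \<Rightarrow> 'k::field) \<Rightarrow> real \<Rightarrow> bool" where
  "terminally_rigid K f k z \<epsilon> \<longleftrightarrow> card (Sigma_eps K f k z \<epsilon>) = 1"

end

theory Submission
  imports Defs
begin

text \<open>Let \<open>\<tau>0\<close> be the simplex whose entry makes \<open>\<alpha>\<close> a boundary, so that \<open>b = f \<tau>0\<close>,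
and let \<open>g\<close> be an injective filtration with \<open>|f - g| \<le> \<epsilon>\<close>. Two facts show that
\<open>\<tau>0\<close> is again the simplex at which \<open>\<alpha>\<close> becomes a boundary along \<open>g\<close>.
First, \<open>\<alpha>\<close> is a boundary in \<open>K\<^sup>g\<^bsub>g \<tau>0\<^esub>\<close>: going up along \<open>f\<close>, an \<open>(n+1)\<close>-simplex
\<open>s\<close> with \<open>f s \<le> b\<close> either enters before \<open>\<tau>0\<close> along \<open>g\<close>, or \<open>f s\<close> lies within
\<open>2\<epsilon>\<close> below \<open>b\<close>; then \<open>s\<close> is not terminal, so \<open>\<partial>s\<close> is a boundary of earlier
simplices. Second, \<open>\<alpha>\<close> is no boundary of simplices entering before \<open>\<tau>0\<close> along \<open>g\<close>:
the difference of such a bounding chain and one inside \<open>K\<^sup>f\<^sub>b\<close> is an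
\<open>(n+1)\<close>-cycle whose \<open>f\<close>-latest simplex would be a birth simplex with value in
\<open>(b, b + 2\<epsilon>)\<close>.\<close>

lemma finite_arg_max_exists:
  fixes f :: "'a \<Rightarrow> 'b::linorder"
  assumes "finite A" "A \<noteq> {}"
  obtains x where "x \<in> A" "\<forall>y\<in>A. f y \<le> f x"
proof -
  have "Max (f ` A) \<in> f ` A" using assms by simp
  then obtain x where x: "Max (f ` A) = f x" "x \<in> A" by (rule imageE)
  have "f y \<le> f x" if "y \<in> A" for y
    unfolding x(1)[symmetric] using assms(1) that by simp
  then show thesis using that x(2) by blast
qed

lemma finite_arg_min_exists:
  fixes f :: "'a \<Rightarrow> 'b::linorder"
  assumes "finite A" "A \<noteq> {}"
  obtains x where "x \<in> A" "\<forall>y\<in>A. f x \<le> f y"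
proof -
  have "Min (f ` A) \<in> f ` A" using assms by simp
  then obtain x where x: "Min (f ` A) = f x" "x \<in> A" by (rule imageE)
  have "f x \<le> f y" if "y \<in> A" for y
    unfolding x(1)[symmetric] using assms(1) that by simp
  then show thesis using that x(2) by blast
qed

lemma boundary_op_eq_sum:
  assumes "finite S" "{\<sigma>. c \<sigma> \<noteq> 0} \<subseteq> S"
  shows "boundary_op c \<tau> = (\<Sum>\<sigma>\<in>S. c \<sigma> * incidence \<sigma> \<tau>)"
  unfolding boundary_op_def by (rule sum.mono_neutral_left) (use assms in auto)

lemma boundary_op_lincomb:
  assumes "finite {\<sigma>. c \<sigma> \<noteq> 0}" "finite {\<sigma>. d \<sigma> \<noteq> 0}"
  shows "boundary_op (\<lambda>\<sigma>. x * c \<sigma> + y * d \<sigma>) \<tau> = x * boundary_op c \<tau> + y * boundary_op d \<tau>"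
proof -
  let ?S = "{\<sigma>. c \<sigma> \<noteq> 0} \<union> {\<sigma>. d \<sigma> \<noteq> 0}"
  have S: "finite ?S" using assms by simp
  have "boundary_op (\<lambda>\<sigma>. x * c \<sigma> + y * d \<sigma>) \<tau> = (\<Sum>\<sigma>\<in>?S. (x * c \<sigma> + y * d \<sigma>) * incidence \<sigma> \<tau>)"
    by (rule boundary_op_eq_sum[OF S]) auto
  also have "\<dots> = x * (\<Sum>\<sigma>\<in>?S. c \<sigma> * incidence \<sigma> \<tau>) + y * (\<Sum>\<sigma>\<in>?S. d \<sigma> * incidence \<sigma> \<tau>)"
    by (simp add: distrib_right sum.distrib sum_distrib_left mult.assoc)
  also have "\<dots> = x * boundary_op c \<tau> + y * boundary_op d \<tau>"
    using boundary_op_eq_sum[OF S, of c \<tau>] boundary_op_eq_sum[OF S, of d \<tau>] by auto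
  finally show ?thesis .
qed

lemma boundary_op_elem_chain:
  "boundary_op (elem_chain t :: 'v::linorder set \<Rightarrow> 'k::field) = incidence t"
proof -
  have "{\<sigma>. (elem_chain t \<sigma> :: 'k) \<noteq> 0} = {t}" by (auto simp: elem_chain_def)
  then show ?thesis by (simp add: fun_eq_iff boundary_op_def elem_chain_def)
qed

lemma finite_chain_support: "is_chain L k c \<Longrightarrow> finite L \<Longrightarrow> finite {\<sigma>. c \<sigma> \<noteq> 0}"
  unfolding is_chain_def by (blast intro: finite_subset)

lemma is_boundary_zero: "is_boundary L k (\<lambda>_. 0)"
  unfolding is_boundary_def is_chain_def by (auto simp: boundary_op_def)

lemma is_boundary_mono: "is_boundary L k z \<Longrightarrow> L \<subseteq> L' \<Longrightarrow> is_boundary L' k z"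
  unfolding is_boundary_def is_chain_def by blast

lemma incidence_nonzeroD: "incidence \<sigma> \<tau> \<noteq> 0 \<Longrightarrow> finite \<sigma> \<and> \<tau> \<subseteq> \<sigma> \<and> card (\<sigma> - \<tau>) = 1"
  by (simp add: incidence_def split: if_splits)

lemma incidence_Diff_singleton:
  assumes "finite \<sigma>" "v \<in> \<sigma>"
  shows "incidence \<sigma> (\<sigma> - {v}) = (-1) ^ card {w\<in>\<sigma>. w < v}"
proof -
  have "\<sigma> - (\<sigma> - {v}) = {v}" using assms by auto
  then show ?thesis using assms by (simp add: incidence_def)
qed

lemma incidence_face_sum_codim2:
  assumes "finite s" "\<rho> \<subseteq> s" "card (s - \<rho>) = 2"
  shows "(\<Sum>v\<in>s - \<rho>. incidence s (s - {v}) * (incidence (s - {v}) \<rho> :: 'k::field)) = 0"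
proof -
  obtain v w where vw: "s - \<rho> = {v, w}" "v < w"
    using assms(3) by (metis card_2_iff insert_commute linorder_neqE)
  then have vs: "v \<in> s" "w \<in> s" and \<rho>: "\<rho> = s - {v} - {w}" "\<rho> = s - {w} - {v}"
    using assms(2) by blast+
  \<comment> \<open>Removing \<open>v\<close> first shifts the position of \<open>w\<close> by one; removing \<open>w\<close> first
      leaves the position of \<open>v\<close> unchanged.\<close>
  have "{x\<in>s. x < w} = insert v {x \<in> s - {v}. x < w}" using vw(2) vs by auto
  then have shift: "card {x\<in>s. x < w} = Suc (card {x \<in> s - {v}. x < w})"
    using assms(1) by simp
  have keep: "{x \<in> s - {w}. x < v} = {x\<in>s. x < v}" using vw(2) by auto
  have "(\<Sum>u\<in>s - \<rho>. incidence s (s - {u}) * (incidence (s - {u}) \<rho> :: 'k))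
      = incidence s (s - {v}) * incidence (s - {v}) (s - {v} - {w})
        + incidence s (s - {w}) * incidence (s - {w}) (s - {w} - {v})"
    using vw \<rho> by simp
  also have "\<dots> = 0"
  proof -
    have m: "v \<in> s - {w}" "w \<in> s - {v}" using vw(2) vs by auto
    show ?thesis
      unfolding incidence_Diff_singleton[OF assms(1) vs(1)] incidence_Diff_singleton[OF assms(1) vs(2)]
        incidence_Diff_singleton[OF finite_Diff[OF assms(1)] m(1)]
        incidence_Diff_singleton[OF finite_Diff[OF assms(1)] m(2)] keep shift
      by simp
  qed
  finally show ?thesis .
qed

lemma incidence_face_sum_not_codim2:
  assumes "finite s" "\<not> (\<rho> \<subseteq> s \<and> card (s - \<rho>) = 2)"
  shows "(\<Sum>v\<in>s - \<rho>. incidence s (s - {v}) * (incidence (s - {v}) \<rho> :: 'k::field)) = 0"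
proof (intro sum.neutral ballI)
  fix v assume v: "v \<in> s - \<rho>"
  show "incidence s (s - {v}) * (incidence (s - {v}) \<rho> :: 'k) = 0"
  proof (rule ccontr)
    assume "incidence s (s - {v}) * (incidence (s - {v}) \<rho> :: 'k) \<noteq> 0"
    then have "\<rho> \<subseteq> s - {v}" "card (s - {v} - \<rho>) = 1"
      using incidence_nonzeroD[of "s - {v}" \<rho>] by auto
    moreover have "s - \<rho> = insert v (s - {v} - \<rho>)" using v by blast
    ultimately show False using assms by auto
  qed
qed

lemma boundary_op_incidence:
  assumes "finite s"
  shows "boundary_op (incidence s :: 'v::linorder set \<Rightarrow> 'k::field) = (\<lambda>_. 0)"
proof
  fix \<rho> :: "'v set"
  have supp: "{\<tau>. incidence s \<tau> \<noteq> (0::'k)} \<subseteq> (\<lambda>v. s - {v}) ` s"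
  proof
    fix \<tau> assume "\<tau> \<in> {\<tau>. incidence s \<tau> \<noteq> (0::'k)}"
    then have "\<tau> \<subseteq> s" "card (s - \<tau>) = 1" using incidence_nonzeroD by blast+
    then obtain v where "s - \<tau> = {v}" "\<tau> \<subseteq> s" by (meson card_1_singletonE)
    then show "\<tau> \<in> (\<lambda>v. s - {v}) ` s" by blast
  qed
  have "boundary_op (incidence s :: 'v set \<Rightarrow> 'k) \<rho>
      = (\<Sum>\<tau>\<in>(\<lambda>v. s - {v}) ` s. incidence s \<tau> * incidence \<tau> \<rho>)"
    by (rule boundary_op_eq_sum[OF finite_imageI[OF assms] supp])
  also have "\<dots> = (\<Sum>v\<in>s. incidence s (s - {v}) * (incidence (s - {v}) \<rho> :: 'k))"
    by (subst sum.reindex) (auto simp: inj_on_def)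
  also have "\<dots> = (\<Sum>v\<in>s - \<rho>. incidence s (s - {v}) * (incidence (s - {v}) \<rho> :: 'k))"
  proof (rule sum.mono_neutral_right)
    show "\<forall>v\<in>s - (s - \<rho>). incidence s (s - {v}) * (incidence (s - {v}) \<rho> :: 'k) = 0"
    proof
      fix v assume "v \<in> s - (s - \<rho>)"
      then have "\<not> \<rho> \<subseteq> s - {v}" by auto
      then show "incidence s (s - {v}) * (incidence (s - {v}) \<rho> :: 'k) = 0"
        using incidence_nonzeroD[of "s - {v}" \<rho>] by auto
    qed
  qed (use assms in blast)+
  also have "\<dots> = 0"
    using assms incidence_face_sum_codim2 incidence_face_sum_not_codim2 by blast
  finally show "boundary_op (incidence s :: 'v set \<Rightarrow> 'k) \<rho> = 0" .
qed

lemma is_boundary_boundary_op: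
  assumes "finite L" "finite M" "is_chain M (Suc k) (c :: 'v::linorder set \<Rightarrow> 'k::field)"
    and "\<And>t. t \<in> M \<Longrightarrow> card t = k + 2 \<Longrightarrow> is_boundary L k (incidence t :: 'v set \<Rightarrow> 'k)"
  shows "is_boundary L k (boundary_op c)"
proof -
  let ?S = "{\<sigma>. c \<sigma> \<noteq> 0}"
  have S: "finite ?S" using finite_chain_support[OF assms(3,2)] .
  have "\<forall>t\<in>?S. \<exists>h. is_chain L (Suc k) h \<and> boundary_op h = (incidence t :: 'v set \<Rightarrow> 'k)"
  proof
    fix t assume "t \<in> ?S"
    then have "t \<in> M" "card t = k + 2" using assms(3) unfolding is_chain_def is_simplex_dim_def by auto
    then show "\<exists>h. is_chain L (Suc k) h \<and> boundary_op h = (incidence t :: 'v set \<Rightarrow> 'k)"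
      using assms(4) unfolding is_boundary_def by blast
  qed
  then obtain h :: "'v set \<Rightarrow> 'v set \<Rightarrow> 'k"
    where h: "\<forall>t\<in>?S. is_chain L (Suc k) (h t) \<and> boundary_op (h t) = incidence t"
    by (rule bchoice[elim_format]) blast
  define H where "H = (\<lambda>\<sigma>. \<Sum>t\<in>?S. c t * h t \<sigma>)"
  have chain: "is_chain L (Suc k) H"
    unfolding is_chain_def
  proof (intro allI impI)
    fix \<sigma> assume "H \<sigma> \<noteq> 0"
    then obtain t where "t \<in> ?S" "c t * h t \<sigma> \<noteq> 0"
      unfolding H_def by (meson sum.not_neutral_contains_not_neutral)
    then show "\<sigma> \<in> L \<and> is_simplex_dim (Suc k) \<sigma>" using h unfolding is_chain_def by auto
  qed
  have "boundary_op H \<tau> = boundary_op c \<tau>" for \<tau>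
  proof -
    have supp: "{\<sigma>. h t \<sigma> \<noteq> 0} \<subseteq> L" if "t \<in> ?S" for t
      using h that unfolding is_chain_def by auto
    have "boundary_op H \<tau> = (\<Sum>\<sigma>\<in>L. H \<sigma> * incidence \<sigma> \<tau>)"
      using chain by (intro boundary_op_eq_sum[OF assms(1)]) (auto simp: is_chain_def)
    also have "\<dots> = (\<Sum>t\<in>?S. c t * (\<Sum>\<sigma>\<in>L. h t \<sigma> * incidence \<sigma> \<tau>))"
      by (simp add: H_def sum_distrib_right sum_distrib_left mult.assoc sum.swap[of _ L])
    also have "\<dots> = (\<Sum>t\<in>?S. c t * incidence t \<tau>)"
      using h by (intro sum.cong refl) (simp add: boundary_op_eq_sum[OF assms(1) supp, symmetric])
    also have "\<dots> = boundary_op c \<tau>" by (rule boundary_op_eq_sum[OF S, symmetric]) simp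
    finally show ?thesis .
  qed
  then show ?thesis using chain unfolding is_boundary_def by auto
qed

lemma ex_is_boundary_up_to_simplex:
  fixes f :: "'v::linorder set \<Rightarrow> real" and z :: "'v set \<Rightarrow> 'k::field"
  assumes "finite L" "is_boundary L k z" "z \<noteq> (\<lambda>_. 0)"
  shows "\<exists>s\<in>L. is_boundary {\<sigma>\<in>L. f \<sigma> \<le> f s} k z"
proof -
  obtain c where c: "is_chain L (Suc k) c" "boundary_op c = z"
    using assms(2) unfolding is_boundary_def by blast
  let ?M = "{\<sigma>. c \<sigma> \<noteq> 0}"
  have "?M \<subseteq> L" using c(1) unfolding is_chain_def by blast
  moreover have "?M \<noteq> {}"
    using c(2) assms(3) by (auto simp: boundary_op_def)
  ultimately obtain s where s: "s \<in> ?M" "\<forall>t\<in>?M. f t \<le> f s"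
    using finite_arg_max_exists[of ?M f] finite_subset[OF _ assms(1)] by blast
  then have "is_chain {\<sigma>\<in>L. f \<sigma> \<le> f s} (Suc k) c" using c(1) unfolding is_chain_def by auto
  then show ?thesis using c s \<open>?M \<subseteq> L\<close> unfolding is_boundary_def by blast
qed

lemma boundary_entry_simplex_exists:
  fixes f :: "'v::linorder set \<Rightarrow> real" and z :: "'v set \<Rightarrow> 'k::field"
  assumes "finite K" "is_boundary (sublevel K f q) k z" "z \<noteq> (\<lambda>_. 0)"
  obtains \<tau>0 where "\<tau>0 \<in> K" "is_boundary (sublevel K f (f \<tau>0)) k z"
    "\<not> is_boundary {\<sigma>\<in>K. f \<sigma> < f \<tau>0} k z"
proof -
  let ?A = "{s\<in>K. is_boundary (sublevel K f (f s)) k z}"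
  have entry: "\<exists>s\<in>L. s \<in> ?A" if LK: "L \<subseteq> K" and bd: "is_boundary L k z" for L
  proof -
    obtain s where "s \<in> L" "is_boundary {\<sigma>\<in>L. f \<sigma> \<le> f s} k z"
      using ex_is_boundary_up_to_simplex[OF finite_subset[OF LK assms(1)] bd assms(3)] by blast
    moreover have "{\<sigma>\<in>L. f \<sigma> \<le> f s} \<subseteq> sublevel K f (f s)"
      using LK unfolding sublevel_def by blast
    ultimately show ?thesis using LK is_boundary_mono by blast
  qed
  have "?A \<noteq> {}" using entry[OF _ assms(2)] unfolding sublevel_def by blast
  moreover have "finite ?A" using assms(1) by simp
  ultimately obtain \<tau>0 where \<tau>0: "\<tau>0 \<in> ?A" "\<forall>s\<in>?A. f \<tau>0 \<le> f s"
    using finite_arg_min_exists by blast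
  moreover have "\<not> is_boundary {\<sigma>\<in>K. f \<sigma> < f \<tau>0} k z"
  proof
    assume "is_boundary {\<sigma>\<in>K. f \<sigma> < f \<tau>0} k z"
    then obtain s where "s \<in> ?A" "f s < f \<tau>0" using entry[of "{\<sigma>\<in>K. f \<sigma> < f \<tau>0}"] by blast
    then show False using \<tau>0(2) by fastforce
  qed
  ultimately show thesis using that by blast
qed

lemma termination_scale_eq_entry:
  assumes "is_boundary (sublevel K f (f \<tau>0)) k z" "\<not> is_boundary {\<sigma>\<in>K. f \<sigma> < f \<tau>0} k z"
    and "\<not> is_boundary (sublevel K f a) k z"
  shows "termination_scale K f k a z = f \<tau>0"
  unfolding termination_scale_def
proof (rule cInf_eq_minimum)
  have "\<not> f \<tau>0 \<le> a"
  proof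
    assume "f \<tau>0 \<le> a"
    then have "sublevel K f (f \<tau>0) \<subseteq> sublevel K f a" unfolding sublevel_def by auto
    then show False using assms(1,3) is_boundary_mono by blast
  qed
  then show "f \<tau>0 \<in> {q. a \<le> q \<and> is_boundary (sublevel K f q) k z}" using assms(1) by simp
next
  fix q assume q: "q \<in> {q. a \<le> q \<and> is_boundary (sublevel K f q) k z}"
  show "f \<tau>0 \<le> q"
  proof (rule ccontr)
    assume "\<not> f \<tau>0 \<le> q"
    then have "sublevel K f q \<subseteq> {\<sigma>\<in>K. f \<sigma> < f \<tau>0}" unfolding sublevel_def by auto
    then show False using q assms(2) is_boundary_mono by blast
  qed
qed

lemma is_cycle_diff:
  assumes "finite L" "is_chain L k c" "is_chain L k c'" "boundary_op c = boundary_op c'"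
  shows "is_cycle L k (\<lambda>\<sigma>. c \<sigma> - c' \<sigma>)"
proof -
  have "boundary_op (\<lambda>\<sigma>. 1 * c \<sigma> + (- 1) * c' \<sigma>) \<tau> = 0" for \<tau>
    using assms boundary_op_lincomb[of c c' 1 "- 1" \<tau>] finite_chain_support by auto
  moreover have "is_chain L k (\<lambda>\<sigma>. c \<sigma> - c' \<sigma>)"
    using assms(2,3) unfolding is_chain_def by (metis diff_self)
  ultimately show ?thesis unfolding is_cycle_def by (simp add: fun_eq_iff)
qed

lemma incidence_is_boundary:
  assumes "s \<in> L" "finite s" "card s = k + 2"
  shows "is_boundary L k (incidence s :: 'v::linorder set \<Rightarrow> 'k::field)"
proof -
  have "is_chain L (Suc k) (elem_chain s :: 'v set \<Rightarrow> 'k)"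
    using assms unfolding is_chain_def elem_chain_def is_simplex_dim_def by auto
  then show ?thesis unfolding is_boundary_def using boundary_op_elem_chain by metis
qed

lemma incidence_is_cycle_strict_sublevel:
  assumes sc: "simplicial_complex K" and fi: "inj_filtration K f" and sK: "s \<in> K"
    and cs: "card s = n + 2"
  shows "is_cycle {\<sigma>\<in>K. f \<sigma> < f s} n (incidence s :: 'v::linorder set \<Rightarrow> 'k::field)"
proof -
  have fs: "finite s" using sc sK unfolding simplicial_complex_def by blast
  have "\<tau> \<in> K \<and> f \<tau> < f s \<and> is_simplex_dim n \<tau>" if "incidence s \<tau> \<noteq> (0::'k)" for \<tau>
  proof -
    have \<tau>: "\<tau> \<subseteq> s" "card (s - \<tau>) = 1" using incidence_nonzeroD that by blast+
    then have ct: "card \<tau> = n + 1"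
      using cs fs card_Diff_subset[OF finite_subset[OF \<tau>(1) fs] \<tau>(1)] card_mono[OF fs \<tau>(1)] by simp
    then have "\<tau> \<noteq> {}" by auto
    then have \<tau>K: "\<tau> \<in> K" using sc sK \<tau>(1) unfolding simplicial_complex_def by blast
    moreover have "\<tau> \<noteq> s" using \<tau>(2) by auto
    then have "f \<tau> \<noteq> f s" using fi \<tau>K sK unfolding inj_filtration_def inj_on_def by blast
    moreover have "f \<tau> \<le> f s" using fi \<tau>K sK \<tau>(1) unfolding inj_filtration_def filtration_def by blast
    ultimately show ?thesis using ct finite_subset[OF \<tau>(1) fs] by (simp add: is_simplex_dim_def)
  qed
  then show ?thesis unfolding is_cycle_def is_chain_def using boundary_op_incidence[OF fs] by blast
qed

lemma incidence_is_boundary_if_not_terminal: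
  assumes sc: "simplicial_complex K" and fi: "inj_filtration K f" and sK: "s \<in> K"
    and cs: "card s = n + 2" and "\<not> terminal_simplex TYPE('k::field) K f s"
  shows "is_boundary {\<sigma>\<in>K. f \<sigma> < f s} n (incidence s :: 'v::linorder set \<Rightarrow> 'k)"
proof -
  have "finite s" using sc sK unfolding simplicial_complex_def by blast
  then have "is_boundary {\<sigma>\<in>K. f \<sigma> \<le> f s} n (incidence s :: 'v set \<Rightarrow> 'k)"
    using sK cs by (intro incidence_is_boundary) auto
  then show ?thesis
    using assms(5) incidence_is_cycle_strict_sublevel[OF sc fi sK cs] sK cs
    unfolding terminal_simplex_def by blast
qed

lemma birth_simplex_if_max_of_cycle:
  fixes d :: "'v::linorder set \<Rightarrow> 'k::field"
  assumes fin: "finite K" and finj: "inj_on f K" and d: "is_cycle K (Suc k) d"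
    and du: "d u \<noteq> 0" and umax: "\<And>\<sigma>. d \<sigma> \<noteq> 0 \<Longrightarrow> f \<sigma> \<le> f u"
  shows "birth_simplex TYPE('k) K f u"
proof -
  have uK: "u \<in> K" and cu: "card u = k + 2"
    using d du unfolding is_cycle_def is_chain_def is_simplex_dim_def by auto
  \<comment> \<open>\<open>u - d / d u\<close> has the same boundary as \<open>u\<close> but no longer contains \<open>u\<close>.\<close>
  define h where "h = (\<lambda>\<sigma>. 1 * elem_chain u \<sigma> + (- 1 / d u) * d \<sigma>)"
  have "is_chain {\<sigma>\<in>K. f \<sigma> < f u} (Suc k) h"
    unfolding is_chain_def
  proof (intro allI impI)
    fix \<sigma> assume h\<sigma>: "h \<sigma> \<noteq> 0"
    moreover have "h u = 0" using du by (simp add: h_def elem_chain_def)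
    ultimately have "\<sigma> \<noteq> u" by auto
    moreover have "d \<sigma> \<noteq> 0" using h\<sigma> \<open>\<sigma> \<noteq> u\<close> by (auto simp: h_def elem_chain_def)
    moreover have "\<sigma> \<in> K" "is_simplex_dim (Suc k) \<sigma>"
      using d \<open>d \<sigma> \<noteq> 0\<close> unfolding is_cycle_def is_chain_def by auto
    moreover have "f \<sigma> \<noteq> f u" using \<open>\<sigma> \<noteq> u\<close> \<open>\<sigma> \<in> K\<close> uK finj unfolding inj_on_def by blast
    ultimately show "\<sigma> \<in> {\<sigma>\<in>K. f \<sigma> < f u} \<and> is_simplex_dim (Suc k) \<sigma>"
      using umax by (simp add: order_less_le)
  qed
  moreover have "boundary_op h = boundary_op (elem_chain u :: 'v set \<Rightarrow> 'k)"
  proof -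
    have e: "finite {\<sigma>. (elem_chain u \<sigma> :: 'k) \<noteq> 0}" by (simp add: elem_chain_def)
    have "finite {\<sigma>. d \<sigma> \<noteq> 0}"
      using d fin finite_chain_support unfolding is_cycle_def by blast
    then show ?thesis
      using d unfolding h_def is_cycle_def fun_eq_iff by (subst boundary_op_lincomb[OF e]) auto
  qed
  ultimately show ?thesis unfolding birth_simplex_def is_boundary_def using uK cu by auto
qed

lemma incidence_is_boundary_perturbed_sublevel:
  fixes K :: "'v::linorder set set" and f g :: "'v set \<Rightarrow> real"
  assumes sc: "simplicial_complex K" and fi: "inj_filtration K f" and \<tau>0K: "\<tau>0 \<in> K"
    and fg: "\<forall>\<sigma>\<in>K. \<bar>f \<sigma> - g \<sigma>\<bar> \<le> \<epsilon>"
    and no_terminal: "\<And>\<tau>. terminal_simplex TYPE('k::field) K f \<tau> \<Longrightarrow> card \<tau> = n + 2 \<Longrightarrow>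
      f \<tau> < f \<tau>0 \<Longrightarrow> 2 * \<epsilon> \<le> f \<tau>0 - f \<tau>"
    and "s \<in> K" "card s = n + 2" "f s \<le> f \<tau>0"
  shows "is_boundary (sublevel K g (g \<tau>0)) n (incidence s :: 'v set \<Rightarrow> 'k)"
  using assms(6-8)
proof (induction s rule: measure_induct_rule[of "\<lambda>s. card {t\<in>K. f t < f s}"])
  case (less s)
  have fin: "finite K" using sc unfolding simplicial_complex_def by blast
  show ?case
  proof (cases "g s \<le> g \<tau>0")
    case True
    have "finite s" using sc less.prems(1) unfolding simplicial_complex_def by blast
    then show ?thesis
      using True less.prems(1,2) by (intro incidence_is_boundary) (auto simp: sublevel_def)
  next
    case False
    then have "s \<noteq> \<tau>0" by auto
    then have "f s \<noteq> f \<tau>0" using fi less.prems(1) \<tau>0K unfolding inj_filtration_def inj_on_def by blast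
    then have "f s < f \<tau>0" using less.prems(3) by simp
    have "\<bar>f s - g s\<bar> \<le> \<epsilon>" "\<bar>f \<tau>0 - g \<tau>0\<bar> \<le> \<epsilon>" using fg less.prems(1) \<tau>0K by auto
    then have "f \<tau>0 - f s < 2 * \<epsilon>" using False unfolding abs_le_iff by linarith
    then have not_terminal: "\<not> terminal_simplex TYPE('k) K f s"
      using no_terminal[of s] less.prems(2) \<open>f s < f \<tau>0\<close> by linarith
    then obtain e :: "'v set \<Rightarrow> 'k"
      where e: "is_chain {\<sigma>\<in>K. f \<sigma> < f s} (Suc n) e" "boundary_op e = incidence s"
      using incidence_is_boundary_if_not_terminal[OF sc fi less.prems(1,2) not_terminal]
      unfolding is_boundary_def by blast
    have "is_boundary (sublevel K g (g \<tau>0)) n (boundary_op e)"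
    proof (rule is_boundary_boundary_op[OF _ _ e(1)])
      show "finite (sublevel K g (g \<tau>0))" "finite {\<sigma>\<in>K. f \<sigma> < f s}"
        using fin by (simp_all add: sublevel_def)
      fix t assume t: "t \<in> {\<sigma>\<in>K. f \<sigma> < f s}" "card t = n + 2"
      then have "card {u\<in>K. f u < f t} < card {u\<in>K. f u < f s}"
        using fin by (intro psubset_card_mono) auto
      then show "is_boundary (sublevel K g (g \<tau>0)) n (incidence t :: 'v set \<Rightarrow> 'k)"
        using t \<open>f s < f \<tau>0\<close> by (intro less.IH) auto
    qed
    then show ?thesis using e(2) by simp
  qed
qed

lemma is_boundary_perturbed_sublevel:
  fixes K :: "'v::linorder set set" and f g :: "'v set \<Rightarrow> real" and \<alpha> :: "'v set \<Rightarrow> 'k::field"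
  assumes sc: "simplicial_complex K" and fi: "inj_filtration K f" and \<tau>0K: "\<tau>0 \<in> K"
    and bd: "is_boundary (sublevel K f (f \<tau>0)) n \<alpha>"
    and fg: "\<forall>\<sigma>\<in>K. \<bar>f \<sigma> - g \<sigma>\<bar> \<le> \<epsilon>"
    and no_terminal: "\<And>\<tau>. terminal_simplex TYPE('k) K f \<tau> \<Longrightarrow> card \<tau> = n + 2 \<Longrightarrow>
      f \<tau> < f \<tau>0 \<Longrightarrow> 2 * \<epsilon> \<le> f \<tau>0 - f \<tau>"
  shows "is_boundary (sublevel K g (g \<tau>0)) n \<alpha>"
proof -
  have fin: "finite K" using sc unfolding simplicial_complex_def by blast
  obtain c where c: "is_chain (sublevel K f (f \<tau>0)) (Suc n) c" "boundary_op c = \<alpha>"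
    using bd unfolding is_boundary_def by blast
  have "is_boundary (sublevel K g (g \<tau>0)) n (boundary_op c)"
  proof (rule is_boundary_boundary_op[OF _ _ c(1)])
    show "finite (sublevel K g (g \<tau>0))" "finite (sublevel K f (f \<tau>0))"
      using fin by (simp_all add: sublevel_def)
    show "is_boundary (sublevel K g (g \<tau>0)) n (incidence t :: 'v set \<Rightarrow> 'k)"
      if "t \<in> sublevel K f (f \<tau>0)" "card t = n + 2" for t
      using that incidence_is_boundary_perturbed_sublevel[OF sc fi \<tau>0K fg no_terminal]
      unfolding sublevel_def by blast
  qed
  then show ?thesis using c(2) by simp
qed

lemma bounding_chain_avoiding_entry_has_birth_simplex:
  fixes K :: "'v::linorder set set" and f :: "'v set \<Rightarrow> real" and \<alpha> :: "'v set \<Rightarrow> 'k::field"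
  assumes fin: "finite K" and finj: "inj_on f K" and \<tau>0K: "\<tau>0 \<in> K"
    and bd: "is_boundary (sublevel K f (f \<tau>0)) n \<alpha>"
    and nbd: "\<not> is_boundary {\<sigma>\<in>K. f \<sigma> < f \<tau>0} n \<alpha>"
    and c: "is_chain K (Suc n) c" "boundary_op c = \<alpha>" "c \<tau>0 = 0"
  obtains u where "c u \<noteq> 0" "f \<tau>0 < f u" "birth_simplex TYPE('k) K f u"
proof -
  obtain c0 where c0: "is_chain (sublevel K f (f \<tau>0)) (Suc n) c0" "boundary_op c0 = \<alpha>"
    using bd unfolding is_boundary_def by blast
  let ?U = "{\<sigma>. c \<sigma> \<noteq> 0} - {\<sigma>\<in>K. f \<sigma> < f \<tau>0}"
  have "?U \<noteq> {}"
  proof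
    assume "?U = {}"
    then have "is_chain {\<sigma>\<in>K. f \<sigma> < f \<tau>0} (Suc n) c" using c(1) unfolding is_chain_def by blast
    then show False using nbd c(2) unfolding is_boundary_def by blast
  qed
  moreover have "finite ?U" using finite_chain_support[OF c(1) fin] by auto
  ultimately obtain u where u: "u \<in> ?U" "\<forall>\<sigma>\<in>?U. f \<sigma> \<le> f u"
    using finite_arg_max_exists by blast
  then have "u \<in> K" "u \<noteq> \<tau>0" using c(1,3) unfolding is_chain_def by auto
  then have "f u \<noteq> f \<tau>0" using \<tau>0K finj unfolding inj_on_def by blast
  then have "f \<tau>0 < f u" using u(1) \<open>u \<in> K\<close> by auto
  have c0_below: "f \<sigma> \<le> f \<tau>0" if "c0 \<sigma> \<noteq> 0" for \<sigma>
    using c0(1) that unfolding is_chain_def sublevel_def by blast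
  \<comment> \<open>\<open>u\<close> is also the \<open>f\<close>-latest simplex of the cycle \<open>c - c0\<close>.\<close>
  have "is_chain K (Suc n) c0" using c0(1) unfolding is_chain_def sublevel_def by auto
  then have "is_cycle K (Suc n) (\<lambda>\<sigma>. c \<sigma> - c0 \<sigma>)"
    using fin c by (intro is_cycle_diff) (auto simp: c0(2))
  moreover have "c0 u = 0" using c0_below \<open>f \<tau>0 < f u\<close> by fastforce
  moreover have "f \<sigma> \<le> f u" if "c \<sigma> - c0 \<sigma> \<noteq> 0" for \<sigma>
  proof (cases "c0 \<sigma> = 0")
    case True
    then show ?thesis using that u(2) \<open>f \<tau>0 < f u\<close> c(1) unfolding is_chain_def by force
  next
    case False
    then show ?thesis using c0_below \<open>f \<tau>0 < f u\<close> by fastforce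
  qed
  ultimately have "birth_simplex TYPE('k) K f u"
    using u(1) by (intro birth_simplex_if_max_of_cycle[OF fin finj]) auto
  then show thesis using that u(1) \<open>f \<tau>0 < f u\<close> by blast
qed

lemma not_is_boundary_perturbed_strict_sublevel:
  fixes K :: "'v::linorder set set" and f g :: "'v set \<Rightarrow> real" and \<alpha> :: "'v set \<Rightarrow> 'k::field"
  assumes fin: "finite K" and finj: "inj_on f K" and \<tau>0K: "\<tau>0 \<in> K"
    and bd: "is_boundary (sublevel K f (f \<tau>0)) n \<alpha>"
    and nbd: "\<not> is_boundary {\<sigma>\<in>K. f \<sigma> < f \<tau>0} n \<alpha>"
    and fg: "\<forall>\<sigma>\<in>K. \<bar>f \<sigma> - g \<sigma>\<bar> \<le> \<epsilon>"
    and no_birth: "\<And>\<tau>. birth_simplex TYPE('k) K f \<tau> \<Longrightarrow> card \<tau> = n + 2 \<Longrightarrow>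
      f \<tau>0 < f \<tau> \<Longrightarrow> 2 * \<epsilon> \<le> f \<tau> - f \<tau>0"
  shows "\<not> is_boundary {\<sigma>\<in>K. g \<sigma> < g \<tau>0} n \<alpha>"
proof
  assume "is_boundary {\<sigma>\<in>K. g \<sigma> < g \<tau>0} n \<alpha>"
  then obtain c where c: "is_chain {\<sigma>\<in>K. g \<sigma> < g \<tau>0} (Suc n) c" "boundary_op c = \<alpha>"
    unfolding is_boundary_def by blast
  then have "is_chain K (Suc n) c" "c \<tau>0 = 0" unfolding is_chain_def by auto
  then obtain u where u: "c u \<noteq> 0" "f \<tau>0 < f u" "birth_simplex TYPE('k) K f u"
    using bounding_chain_avoiding_entry_has_birth_simplex[OF fin finj \<tau>0K bd nbd _ c(2)] by blast
  then have "u \<in> K" "g u < g \<tau>0" "card u = n + 2"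
    using c(1) unfolding is_chain_def is_simplex_dim_def by auto
  moreover have "2 * \<epsilon> \<le> f u - f \<tau>0" using no_birth u(2,3) \<open>card u = n + 2\<close> by blast
  moreover have "\<bar>f u - g u\<bar> \<le> \<epsilon>" "\<bar>f \<tau>0 - g \<tau>0\<bar> \<le> \<epsilon>" using fg \<open>u \<in> K\<close> \<tau>0K by auto
  ultimately show False unfolding abs_le_iff by linarith
qed

lemma Sigma_eps_eq_singleton:
  fixes K :: "'v::linorder set set" and f :: "'v set \<Rightarrow> real" and \<alpha> :: "'v set \<Rightarrow> 'k::field"
  assumes sc: "simplicial_complex K" and fi: "inj_filtration K f" and \<tau>0K: "\<tau>0 \<in> K"
    and bd: "is_boundary (sublevel K f (f \<tau>0)) n \<alpha>"
    and nbd: "\<not> is_boundary {\<sigma>\<in>K. f \<sigma> < f \<tau>0} n \<alpha>"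
    and "0 \<le> \<epsilon>"
    and no_birth: "\<And>\<tau>. birth_simplex TYPE('k) K f \<tau> \<Longrightarrow> card \<tau> = n + 2 \<Longrightarrow>
      f \<tau>0 < f \<tau> \<Longrightarrow> 2 * \<epsilon> \<le> f \<tau> - f \<tau>0"
    and no_terminal: "\<And>\<tau>. terminal_simplex TYPE('k) K f \<tau> \<Longrightarrow> card \<tau> = n + 2 \<Longrightarrow>
      f \<tau> < f \<tau>0 \<Longrightarrow> 2 * \<epsilon> \<le> f \<tau>0 - f \<tau>"
  shows "Sigma_eps K f n \<alpha> \<epsilon> = {\<tau>0}"
proof (intro equalityI subsetI)
  fix \<tau> assume "\<tau> \<in> Sigma_eps K f n \<alpha> \<epsilon>"
  then obtain g where g: "inj_filtration K g" "\<forall>\<sigma>\<in>K. \<bar>f \<sigma> - g \<sigma>\<bar> \<le> \<epsilon>"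
    and \<tau>: "\<tau> \<in> K" "is_boundary (sublevel K g (g \<tau>)) n \<alpha>"
      "\<forall>r < g \<tau>. \<not> is_boundary (sublevel K g r) n \<alpha>"
    unfolding Sigma_eps_def is_Delta_def by blast
  have fin: "finite K" using sc unfolding simplicial_complex_def by blast
  have "is_boundary (sublevel K g (g \<tau>0)) n \<alpha>"
    by (rule is_boundary_perturbed_sublevel[OF sc fi \<tau>0K bd g(2) no_terminal])
  then have "g \<tau> \<le> g \<tau>0" using \<tau>(3) by (meson not_le)
  moreover have "\<not> g \<tau> < g \<tau>0"
  proof
    assume "g \<tau> < g \<tau>0"
    then have "sublevel K g (g \<tau>) \<subseteq> {\<sigma>\<in>K. g \<sigma> < g \<tau>0}" unfolding sublevel_def by auto
    then show False
      using not_is_boundary_perturbed_strict_sublevel[OF fin _ \<tau>0K bd nbd g(2) no_birth]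
        fi \<tau>(2) is_boundary_mono unfolding inj_filtration_def by blast
  qed
  ultimately have "g \<tau> = g \<tau>0" by simp
  then show "\<tau> \<in> {\<tau>0}" using g(1) \<tau>(1) \<tau>0K unfolding inj_filtration_def inj_on_def by blast
next
  fix \<tau> assume "\<tau> \<in> {\<tau>0}"
  moreover have "\<not> is_boundary (sublevel K f r) n \<alpha>" if "r < f \<tau>0" for r
  proof -
    have "sublevel K f r \<subseteq> {\<sigma>\<in>K. f \<sigma> < f \<tau>0}" using that unfolding sublevel_def by auto
    then show ?thesis using nbd is_boundary_mono by blast
  qed
  ultimately show "\<tau> \<in> Sigma_eps K f n \<alpha> \<epsilon>"
    using fi \<tau>0K bd \<open>0 \<le> \<epsilon>\<close> unfolding Sigma_eps_def is_Delta_def by auto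
qed

theorem theorem3p6:
  fixes K :: "'v::linorder set set" and f :: "'v set \<Rightarrow> real"
    and n :: nat and \<alpha> :: "'v set \<Rightarrow> 'k::field" and a b :: real
  assumes "simplicial_complex K"
    and "inj_filtration K f"
    and "n > 0"
    and "is_cycle (sublevel K f a) n \<alpha>"
    and "\<not> is_boundary (sublevel K f a) n \<alpha>"
    and "birth K f n a \<alpha> = a"
    and "\<exists>q\<ge>a. is_boundary (sublevel K f q) n \<alpha>"
    and "termination_scale K f n a \<alpha> = b"
    and "b > a"
  shows "terminally_rigid K f n \<alpha>
           ((1/2) * Min ({b - a}
              \<union> {\<bar>f \<tau> - b\<bar> | \<tau>. birth_simplex TYPE('k) K f \<tau> \<and> card \<tau> = n + 2 \<and> f \<tau> > b}
              \<union> {\<bar>f \<tau> - b\<bar> | \<tau>. terminal_simplex TYPE('k) K f \<tau> \<and> card \<tau> = n + 2 \<and> f \<tau> < b}))"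
proof -
  have fin: "finite K" using assms(1) unfolding simplicial_complex_def by blast
  have "\<alpha> \<noteq> (\<lambda>_. 0)" using assms(5) is_boundary_zero by metis
  then obtain \<tau>0 where \<tau>0: "\<tau>0 \<in> K" "is_boundary (sublevel K f (f \<tau>0)) n \<alpha>"
      "\<not> is_boundary {\<sigma>\<in>K. f \<sigma> < f \<tau>0} n \<alpha>"
    using boundary_entry_simplex_exists[OF fin] assms(7) by blast
  have b: "b = f \<tau>0" using termination_scale_eq_entry[OF \<tau>0(2,3) assms(5)] assms(8) by simp
  define E where "E = {b - a}
    \<union> {\<bar>f \<tau> - b\<bar> | \<tau>. birth_simplex TYPE('k) K f \<tau> \<and> card \<tau> = n + 2 \<and> f \<tau> > b}
    \<union> {\<bar>f \<tau> - b\<bar> | \<tau>. terminal_simplex TYPE('k) K f \<tau> \<and> card \<tau> = n + 2 \<and> f \<tau> < b}"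
  have "E \<subseteq> insert (b - a) ((\<lambda>\<tau>. \<bar>f \<tau> - b\<bar>) ` K)"
    unfolding E_def birth_simplex_def terminal_simplex_def by blast
  then have finE: "finite E" using fin finite_subset by blast
  have "E \<noteq> {}" "\<forall>x\<in>E. 0 \<le> x" using assms(9) unfolding E_def by auto
  then have nonneg: "0 \<le> (1/2) * Min E" using finE by simp
  have window: "2 * ((1/2) * Min E) \<le> \<bar>f \<tau> - f \<tau>0\<bar>" if "\<bar>f \<tau> - b\<bar> \<in> E" for \<tau>
    using Min_le[OF finE that] b by simp
  have "Sigma_eps K f n \<alpha> ((1/2) * Min E) = {\<tau>0}"
  proof (rule Sigma_eps_eq_singleton[OF assms(1,2) \<tau>0 nonneg])
    fix \<tau> assume "birth_simplex TYPE('k) K f \<tau>" "card \<tau> = n + 2" "f \<tau>0 < f \<tau>"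
    then have "\<bar>f \<tau> - b\<bar> \<in> E" unfolding E_def b by blast
    then show "2 * ((1/2) * Min E) \<le> f \<tau> - f \<tau>0" using window \<open>f \<tau>0 < f \<tau>\<close> by fastforce
  next
    fix \<tau> assume "terminal_simplex TYPE('k) K f \<tau>" "card \<tau> = n + 2" "f \<tau> < f \<tau>0"
    then have "\<bar>f \<tau> - b\<bar> \<in> E" unfolding E_def b by blast
    then show "2 * ((1/2) * Min E) \<le> f \<tau>0 - f \<tau>" using window \<open>f \<tau> < f \<tau>0\<close> by fastforce
  qed
  then show ?thesis unfolding terminally_rigid_def E_def by simp
qed

end
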